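(* For $a,b>0$ define $f_a(t)=\mathbf 1_{\{t>0\}}\big(1-a/\sqrt t\big)^+$. Then for all $t>0$, \[ f_b*f_a'(t)\ \ge\ f_{a+b}(t), \] and in fact for $t\ge a^2+b^2$, $f_b*f_a'(t)=1-\dfrac{a\sqrt{t-b^2}+b\sqrt{t-a^2}}{t}$.
   Context: Convolution: $f_1*f_2(t)=\int_0^t f_1(s)f_2(t-s)\,ds$; $f_a'$ denotes the (a.e.) derivative of $f_a$, namely $f_a'(s)=\frac{a}{2s^{3/2}}$ for $s>a^2$ and $0$ for $s<a^2$. *)

theory Defs
  imports "HOL-Analysis.Analysis"
begin

definition fa :: "real \<Rightarrow> real \<Rightarrow> real" where
  "fa a t = (if t > 0 then max 0 (1 - a / sqrt t) else 0)"

definition fa' :: "real \<Rightarrow> real \<Rightarrow> real" where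
  "fa' a s = (if s > a\<^sup>2 then a / (2 * s powr (3/2)) else 0)"

definition conv :: "(real \<Rightarrow> real) \<Rightarrow> (real \<Rightarrow> real) \<Rightarrow> real \<Rightarrow> real" where
  "conv f1 f2 t = integral {0..t} (\<lambda>s. f1 s * f2 (t - s))"

end

theory Submission
  imports Defs
begin

text \<open>The integrand s \<mapsto> f_b(s) f_a'(t - s) vanishes outside [b^2, t - a^2], and there it has the
  elementary antiderivative F(s) = a (t - b \<surd>s) / (t \<surd>(t - s)). Evaluating F at the endpoints
  gives the closed form for t \<ge> a^2 + b^2, while for smaller t both sides of the inequality vanish.
  The inequality for t \<ge> a^2 + b^2 follows from Cauchy-Schwarz,
  a \<surd>(t - b^2) + b \<surd>(t - a^2) \<le> \<surd>((a^2 + (t - a^2)) ((t - b^2) + b^2)) = t,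
  together with \<surd>(t - a^2), \<surd>(t - b^2) \<le> \<surd>t.\<close>

lemma fa_eq_0_if_le_square:
  assumes "b \<ge> 0" and "s \<le> b\<^sup>2"
  shows "fa b s = 0"
proof (cases "s > 0")
  case True
  have "sqrt s \<le> b"
    using assms real_sqrt_le_mono[OF \<open>s \<le> b\<^sup>2\<close>] by simp
  then show ?thesis
    using True by (simp add: fa_def field_simps)
qed (simp add: fa_def)

lemma fa_eq_if_gt_square:
  assumes "b \<ge> 0" and "s > b\<^sup>2"
  shows "fa b s = 1 - b / sqrt s"
proof -
  have "s > 0"
    using assms(2) by (smt (verit) zero_le_power2)
  moreover have "b < sqrt s"
    using assms real_sqrt_less_mono[OF \<open>s > b\<^sup>2\<close>] by simp
  ultimately show ?thesis
    by (simp add: fa_def field_simps)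
qed

lemma fa'_eq_if_gt_square:
  assumes "s > a\<^sup>2"
  shows "fa' a s = a / (2 * (s * sqrt s))"
proof -
  have "s > 0"
    using assms by (smt (verit) zero_le_power2)
  then have "s powr (3/2) = s * sqrt s"
    by (simp add: powr_add [of s 1 "1/2", simplified] powr_half_sqrt)
  then show ?thesis
    using assms by (simp add: fa'_def)
qed

lemma conv_integrand_eq_0:
  assumes "b \<ge> 0" and "s \<notin> {b\<^sup>2..t - a\<^sup>2}"
  shows "fa b s * fa' a (t - s) = 0"
proof (cases "s \<le> b\<^sup>2")
  case True
  then show ?thesis
    using fa_eq_0_if_le_square[OF assms(1)] by simp
next
  case False
  then have "\<not> t - s > a\<^sup>2"
    using assms(2) by auto
  then show ?thesis
    by (simp add: fa'_def)
qed

lemma conv_fa_fa'_eq_0: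
  assumes "b \<ge> 0" and "t < a\<^sup>2 + b\<^sup>2"
  shows "conv (fa b) (fa' a) t = 0"
proof -
  have "(\<lambda>s. fa b s * fa' a (t - s)) = (\<lambda>s. 0)"
    using assms by (intro ext conv_integrand_eq_0) auto
  then show ?thesis
    by (simp add: conv_def)
qed

lemma has_real_derivative_conv_antiderivative:
  assumes "b \<ge> 0" and "b\<^sup>2 < x" and "x < t - a\<^sup>2"
  shows "((\<lambda>s. a * ((t - b * sqrt s) / (t * sqrt (t - s)))) has_real_derivative
           fa b x * fa' a (t - x)) (at x)"
proof -
  have "x > 0" and "t - x > 0"
    using assms(2,3) by (smt (verit) zero_le_power2)+
  obtain u v where u: "u > 0" "sqrt x = u" and v: "v > 0" "sqrt (t - x) = v"
    using \<open>x > 0\<close> \<open>t - x > 0\<close> by (metis real_sqrt_gt_0_iff)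
  have "x = u\<^sup>2" and "t - x = v\<^sup>2"
    using \<open>x > 0\<close> \<open>t - x > 0\<close> by (simp_all flip: u(2) v(2))
  then have t: "t = u\<^sup>2 + v\<^sup>2"
    by simp
  have num: "((\<lambda>s. t - b * sqrt s) has_real_derivative - b / (2 * u)) (at x)"
    using \<open>x > 0\<close> u(2) by (auto intro!: derivative_eq_intros simp: field_simps)
  have den: "((\<lambda>s. t * sqrt (t - s)) has_real_derivative - t / (2 * v)) (at x)"
    using \<open>t - x > 0\<close> v(2) by (auto intro!: derivative_eq_intros simp: field_simps)
  have "t * sqrt (t - x) \<noteq> 0"
    using \<open>t - x > 0\<close> \<open>x > 0\<close> by simp
  from DERIV_cmult[OF DERIV_divide[OF num den this], of a]
  have deriv: "((\<lambda>s. a * ((t - b * sqrt s) / (t * sqrt (t - s)))) has_real_derivative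
      a * ((- b / (2 * u) * (t * v) - (t - b * u) * (- t / (2 * v))) / (t * v * (t * v)))) (at x)"
    by (simp only: u(2) v(2))
  have "- b / (2 * u) * (t * v) - (t - b * u) * (- t / (2 * v)) = t * t * (u - b) / (2 * u * v)"
    using u(1) v(1) by (simp add: field_simps t power2_eq_square)
  moreover have "a * (t * t * (u - b) / (2 * u * v) / (t * v * (t * v))) = (1 - b / u) * (a / (2 * (v\<^sup>2 * v)))"
    using u(1) v(1) \<open>t - x > 0\<close> \<open>x > 0\<close> by (simp add: field_simps power2_eq_square)
  moreover have "fa' a (t - x) = a / (2 * (v\<^sup>2 * v))"
    using fa'_eq_if_gt_square[of a "t - x"] assms(3) v \<open>t - x = v\<^sup>2\<close> by auto
  moreover have "fa b x = 1 - b / u"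
    using fa_eq_if_gt_square[OF assms(1,2)] u(2) by simp
  ultimately show ?thesis
    using deriv by simp
qed

lemma conv_fa_fa'_eq:
  assumes "a > 0" and "b \<ge> 0" and "t \<ge> a\<^sup>2 + b\<^sup>2"
  shows "conv (fa b) (fa' a) t = 1 - (a * sqrt (t - b\<^sup>2) + b * sqrt (t - a\<^sup>2)) / t"
proof -
  define F where "F = (\<lambda>s. a * ((t - b * sqrt s) / (t * sqrt (t - s))))"
  define h where "h = (\<lambda>s. fa b s * fa' a (t - s))"
  have "a\<^sup>2 > 0"
    using assms(1) by simp
  then have "t > 0" and "b\<^sup>2 \<le> t - a\<^sup>2" and "t - b\<^sup>2 > 0"
    using assms(3) by (smt (verit) zero_le_power2)+
  have cont: "continuous_on {b\<^sup>2..t - a\<^sup>2} F"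
    unfolding F_def using \<open>t > 0\<close> \<open>a\<^sup>2 > 0\<close> by (intro continuous_intros) auto
  have deriv: "(F has_vector_derivative h x) (at x)" if "x \<in> {b\<^sup>2<..<t - a\<^sup>2}" for x
    using that has_real_derivative_conv_antiderivative[of b x t a] assms(2)
    by (simp add: F_def h_def has_real_derivative_iff_has_vector_derivative)
  have "(h has_integral F (t - a\<^sup>2) - F (b\<^sup>2)) {b\<^sup>2..t - a\<^sup>2}"
    by (rule fundamental_theorem_of_calculus_interior[OF \<open>b\<^sup>2 \<le> t - a\<^sup>2\<close> cont deriv])
  moreover have "(\<lambda>s. if s \<in> {b\<^sup>2..t - a\<^sup>2} then h s else 0) = h"
    using conv_integrand_eq_0[OF assms(2)] by (auto simp: h_def)
  moreover have "{b\<^sup>2..t - a\<^sup>2} \<subseteq> {0..t}"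
    using \<open>a\<^sup>2 > 0\<close> by auto
  ultimately have "(h has_integral F (t - a\<^sup>2) - F (b\<^sup>2)) {0..t}"
    using has_integral_restrict[of "{b\<^sup>2..t - a\<^sup>2}" "{0..t}" h] by simp
  then have "conv (fa b) (fa' a) t = F (t - a\<^sup>2) - F (b\<^sup>2)"
    unfolding conv_def h_def by (rule integral_unique)
  moreover have "F (t - a\<^sup>2) = 1 - b * sqrt (t - a\<^sup>2) / t"
    using assms(1) \<open>t > 0\<close> by (simp add: F_def field_simps)
  moreover have "F (b\<^sup>2) = a * ((t - b\<^sup>2) / sqrt (t - b\<^sup>2)) / t"
    using assms(2) by (simp add: F_def power2_eq_square mult.commute)
  then have "F (b\<^sup>2) = a * sqrt (t - b\<^sup>2) / t"
    using \<open>t - b\<^sup>2 > 0\<close> by (simp add: real_div_sqrt)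
  ultimately show ?thesis
    by (simp add: add_divide_distrib)
qed

lemma fa_add_le_closed_form:
  assumes "a \<ge> 0" and "b \<ge> 0" and "t > 0" and "t \<ge> a\<^sup>2 + b\<^sup>2"
  shows "fa (a + b) t \<le> 1 - (a * sqrt (t - b\<^sup>2) + b * sqrt (t - a\<^sup>2)) / t"
proof -
  define p where "p = sqrt (t - b\<^sup>2)"
  define q where "q = sqrt (t - a\<^sup>2)"
  have "t - b\<^sup>2 \<ge> 0" and "t - a\<^sup>2 \<ge> 0"
    using assms(4) by (smt (verit) zero_le_power2)+
  then have p2: "p\<^sup>2 = t - b\<^sup>2" and q2: "q\<^sup>2 = t - a\<^sup>2"
    by (simp_all add: p_def q_def)
  have "(a * p + b * q)\<^sup>2 + (a * b - p * q)\<^sup>2 = (a\<^sup>2 + q\<^sup>2) * (b\<^sup>2 + p\<^sup>2)"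
    by (simp add: power2_eq_square algebra_simps)
  also have "\<dots> = t\<^sup>2"
    unfolding p2 q2 by (simp add: power2_eq_square)
  finally have "a * p + b * q \<le> t"
    using \<open>t > 0\<close> by (smt (verit) power2_le_imp_le zero_le_power2)
  then have le_1: "(a * p + b * q) / t \<le> 1"
    using \<open>t > 0\<close> by simp
  have "p \<le> sqrt t" and "q \<le> sqrt t"
    by (simp_all add: p_def q_def)
  then have "a * p + b * q \<le> (a + b) * sqrt t"
    using assms(1,2) by (simp add: distrib_right add_mono mult_left_mono)
  then have "(a * p + b * q) / t \<le> (a + b) * sqrt t / t"
    using \<open>t > 0\<close> by (simp add: divide_right_mono)
  also have "\<dots> = (a + b) / sqrt t"
    using \<open>t > 0\<close> by (simp add: field_simps)
  finally show ?thesis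
    using le_1 \<open>t > 0\<close> by (simp add: fa_def flip: p_def q_def)
qed

theorem mainTheorem11:
  fixes a b :: real
  assumes "a > 0" and "b > 0"
  shows "(\<forall>t>0. conv (fa b) (fa' a) t \<ge> fa (a + b) t)
       \<and> (\<forall>t. t \<ge> a\<^sup>2 + b\<^sup>2 \<longrightarrow>
            conv (fa b) (fa' a) t = 1 - (a * sqrt (t - b\<^sup>2) + b * sqrt (t - a\<^sup>2)) / t)"
proof (intro conjI allI impI)
  fix t :: real
  assume "t > 0"
  show "conv (fa b) (fa' a) t \<ge> fa (a + b) t"
  proof (cases "t \<ge> a\<^sup>2 + b\<^sup>2")
    case True
    then show ?thesis
      using assms \<open>t > 0\<close> conv_fa_fa'_eq fa_add_le_closed_form by simp
  next
    case False
    moreover have "a\<^sup>2 + b\<^sup>2 \<le> (a + b)\<^sup>2"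
      using assms by (simp add: power2_sum)
    ultimately show ?thesis
      using assms conv_fa_fa'_eq_0 fa_eq_0_if_le_square[of "a + b" t] by simp
  qed
qed (use assms conv_fa_fa'_eq in simp)

end
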